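(* Let ${\bf r}=(r_0,r_1,\dots)$ be a finitely supported sequence of nonnegative integers with $n=\sum_{d\ge1}r_d\ge1$ and $\ell=-\sum_{d\ge0}(d-1)r_d\ge1$, let $k\ge0$ be an integer, and let ${\bf S}\in V_{\bf r}$. Then $$|\mathcal{CF}_{{\bf r},k,{\bf S}}|=\ell\,1^{r_1}2^{r_2}3^{r_3}\cdots\prod_{i=1}^{n-1}\big(r_0+i(1+k)\big).$$
   Context: A plane tree is an unlabelled rooted tree in which the children of every vertex are linearly ordered; a plane forest is a finite linearly ordered sequence of plane trees. For vertices $u,v$ in a tree, $v$ is a descendant of $u$ if $u$ lies on the path from the root to $v$ (so $u$ is a descendant of itself). The degree $d_v$ is the number of children of $v$; $v$ is internal if $d_v\ge1$. $I(F)$ is the set of internal vertices of $F$. A plane forest has type ${\bf r}$ if it has exactly $r_i$ vertices of degree $i$ for all $i\ge0$. A labelled forest is a plane forest $F$ together with a bijection (labelling) $I(F)\to[n]$. An internal vertex $v$ of a labelled forest is proper if no internal descendant of $v$ has a smaller label than $v$, and improper otherwise. Fix colors $c_1,c_2,\dots$ and distinct special colors $c_1',c_2',\dots$. A proper $k$-coloring of a labelled forest assigns to each internal vertex $v$ a color, taken from $\{c_1,\dots,c_{d_v}\}$ if $v$ is proper and from $\{c_1,\dots,c_{d_v}\}\cup\{c_1',\dots,c_k'\}$ if $v$ is improper. A $k$-colored labelled forest is a labelled forest together with a proper $k$-coloring; $\mathcal{CF}_{{\bf r},k}$ is the set of $k$-colored labelled forests whose underlying plane forest has type ${\bf r}$.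 $V_{\bf r}$ is the set of sequences ${\bf S}=(S_1,S_2,\dots)$ of pairwise disjoint subsets of $[n]$ with union $[n]$ and $|S_i|=r_i$ for all $i\ge1$. For ${\bf S}\in V_{\bf r}$, $\mathcal{CF}_{{\bf r},k,{\bf S}}$ is the set of forests in $\mathcal{CF}_{{\bf r},k}$ in which every internal vertex $v$ has its label in $S_{d_v}$. *)

theory Defs
  imports Main
begin

text \<open>Internal vertices carry (label, colour); leaves carry the fixed dummy decoration
  (0, Col 0), so that a decorated forest is exactly a plane forest together with a
  labelling of its internal vertices and a colouring.\<close>

datatype 'a tree = Node 'a "'a tree list"

fun root :: "'a tree \<Rightarrow> 'a" where "root (Node a ts) = a"
fun children :: "'a tree \<Rightarrow> 'a tree list" where "children (Node a ts) = ts"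

text \<open>All vertices of a tree (each vertex represented by the subtree rooted at it),
  in preorder; the descendants of a vertex v are the vertices of subtrees v.\<close>
fun subtrees :: "'a tree \<Rightarrow> 'a tree list" where
  "subtrees (Node a ts) = Node a ts # concat (map subtrees ts)"

text \<open>Colours: Col i is c_i, Spec j is the special colour c'_j.\<close>
datatype color = Col nat | Spec nat

type_synonym cforest = "(nat \<times> color) tree list"

definition deg :: "'a tree \<Rightarrow> nat" where "deg t = length (children t)"

definition forest_vertices :: "'a tree list \<Rightarrow> 'a tree list" where
  "forest_vertices F = concat (map subtrees F)"

definition internal_vertices :: "'a tree list \<Rightarrow> 'a tree list" where
  "internal_vertices F = filter (\<lambda>t. deg t \<ge> 1) (forest_vertices F)"

definition label :: "(nat \<times> color) tree \<Rightarrow> nat" where "label t = fst (root t)"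
definition colour :: "(nat \<times> color) tree \<Rightarrow> color" where "colour t = snd (root t)"

definition has_type :: "(nat \<Rightarrow> nat) \<Rightarrow> 'a tree list \<Rightarrow> bool" where
  "has_type r F \<longleftrightarrow> (\<forall>i. length (filter (\<lambda>t. deg t = i) (forest_vertices F)) = r i)"

definition n_of :: "(nat \<Rightarrow> nat) \<Rightarrow> nat" where
  "n_of r = (\<Sum>d\<in>{d. 1 \<le> d \<and> r d \<noteq> 0}. r d)"

definition ell_of :: "(nat \<Rightarrow> nat) \<Rightarrow> int" where
  "ell_of r = - (\<Sum>d\<in>{d. r d \<noteq> 0}. (int d - 1) * int (r d))"

definition is_labelled :: "nat \<Rightarrow> cforest \<Rightarrow> bool" where
  "is_labelled n F \<longleftrightarrow> distinct (map label (internal_vertices F))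
      \<and> set (map label (internal_vertices F)) = {1..n}"

definition leaves_dummy :: "cforest \<Rightarrow> bool" where
  "leaves_dummy F \<longleftrightarrow> (\<forall>t\<in>set (forest_vertices F). deg t = 0 \<longrightarrow> root t = (0, Col 0))"

definition proper :: "(nat \<times> color) tree \<Rightarrow> bool" where
  "proper v \<longleftrightarrow> (\<forall>w\<in>set (subtrees v). deg w \<ge> 1 \<longrightarrow> \<not> label w < label v)"

definition allowed_colours :: "nat \<Rightarrow> (nat \<times> color) tree \<Rightarrow> color set" where
  "allowed_colours k v =
     {Col i | i. 1 \<le> i \<and> i \<le> deg v}
     \<union> (if proper v then {} else {Spec j | j. 1 \<le> j \<and> j \<le> k})"

definition CF :: "(nat \<Rightarrow> nat) \<Rightarrow> nat \<Rightarrow> cforest set" where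
  "CF r k = {F. has_type r F \<and> is_labelled (n_of r) F \<and> leaves_dummy F
       \<and> (\<forall>v\<in>set (internal_vertices F). colour v \<in> allowed_colours k v)}"

definition CFS :: "(nat \<Rightarrow> nat) \<Rightarrow> nat \<Rightarrow> (nat \<Rightarrow> nat set) \<Rightarrow> cforest set" where
  "CFS r k S = {F \<in> CF r k. \<forall>v\<in>set (internal_vertices F). label v \<in> S (deg v)}"

text \<open>V_r: sequences (S_1, S_2, ...) (the value S 0 is irrelevant).\<close>
definition V :: "(nat \<Rightarrow> nat) \<Rightarrow> (nat \<Rightarrow> nat set) set" where
  "V r = {S. (\<forall>i j. 1 \<le> i \<longrightarrow> 1 \<le> j \<longrightarrow> i \<noteq> j \<longrightarrow> S i \<inter> S j = {})
            \<and> (\<Union>i\<in>{1..}. S i) = {1..n_of r}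
            \<and> (\<forall>i\<ge>1. card (S i) = r i)}"

end

theory Submission
  imports Defs
begin

text \<open>Generalise from the labels \<open>[n]\<close> to any finite label set \<open>L\<close>, with a prescribed degree
  \<open>\<delta> x \<ge> 1\<close> for each label and \<open>m\<close> leaves; such a forest has \<open>m + |L| - \<Sum>\<delta> L\<close> trees, which
  is \<open>\<ell>\<close> for \<open>L = [n]\<close> and \<open>m = r\<^sub>0\<close>. Fix the tree \<open>j\<close> containing the minimal label and remove
  its root \<open>x\<close>, whose children become trees \<open>j, \<dots>, j + \<delta> x - 1\<close>. This changes the properness
  of no other vertex, and \<open>x\<close> itself is proper iff it is the minimum. Induction on \<open>|L|\<close> then
  shows that the number of forests with the minimum in tree \<open>j\<close> does not depend on \<open>j\<close> and
  equals \<open>\<Prod>\<delta> L\<close> times the product of \<open>m + i (1 + k)\<close> over \<open>1 \<le> i < |L|\<close>.\<close>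

lemma forest_vertices_Nil [simp]: "forest_vertices [] = []"
  by (simp add: forest_vertices_def)

lemma forest_vertices_Cons [simp]: "forest_vertices (t # F) = subtrees t @ forest_vertices F"
  by (simp add: forest_vertices_def)

lemma forest_vertices_append [simp]:
  "forest_vertices (F @ G) = forest_vertices F @ forest_vertices G"
  by (simp add: forest_vertices_def)

lemma subtrees_Node_eq [simp]: "subtrees (Node a ts) = Node a ts # forest_vertices ts"
  by (simp add: forest_vertices_def)

declare subtrees.simps [simp del]

lemma deg_Node [simp]: "deg (Node a ts) = length ts"
  by (simp add: deg_def)

lemma label_Node [simp]: "label (Node (x, c) ts) = x"
  by (simp add: label_def)

lemma colour_Node [simp]: "colour (Node (x, c) ts) = c"
  by (simp add: colour_def)

lemma internal_vertices_Nil [simp]: "internal_vertices [] = []"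
  by (simp add: internal_vertices_def)

lemma internal_vertices_append [simp]:
  "internal_vertices (F @ G) = internal_vertices F @ internal_vertices G"
  by (simp add: internal_vertices_def)

lemma internal_vertices_Cons_Node [simp]:
  "internal_vertices (Node a ts # F) =
     (if ts = [] then internal_vertices F else Node a ts # internal_vertices ts @ internal_vertices F)"
  by (cases ts) (auto simp: internal_vertices_def)

definition internal_labels :: "cforest \<Rightarrow> nat list" where
  "internal_labels F = map label (internal_vertices F)"

lemma internal_labels_Nil [simp]: "internal_labels [] = []"
  by (simp add: internal_labels_def)

lemma internal_labels_append [simp]:
  "internal_labels (F @ G) = internal_labels F @ internal_labels G"
  by (simp add: internal_labels_def)

lemma internal_labels_Cons_Node [simp]:
  "internal_labels (Node (x, c) ts # F) =
     (if ts = [] then internal_labels F else x # internal_labels ts @ internal_labels F)"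
  by (simp add: internal_labels_def)

lemma internal_labels_Cons: "internal_labels (t # F) = internal_labels [t] @ internal_labels F"
  using internal_labels_append[of "[t]" F] by simp

lemma internal_labels_eq_concat: "internal_labels F = concat (map (\<lambda>t. internal_labels [t]) F)"
  by (induction F) (simp, subst internal_labels_Cons, simp)

lemma set_internal_labels_mono:
  "t \<in> set F \<Longrightarrow> set (internal_labels [t]) \<subseteq> set (internal_labels F)"
  by (subst (2) internal_labels_eq_concat) auto

lemma internal_label_in_tree:
  assumes "y \<in> set (internal_labels F)"
  obtains j where "j < length F" "y \<in> set (internal_labels [F ! j])"
proof -
  obtain t where "t \<in> set F" "y \<in> set (internal_labels [t])"
    using assms by (subst (asm) internal_labels_eq_concat) auto
  then show ?thesis using that by (metis in_set_conv_nth)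
qed

lemma internal_label_tree_unique:
  assumes "distinct (internal_labels F)" "a < length F" "b < length F"
    and "y \<in> set (internal_labels [F ! a])" "y \<in> set (internal_labels [F ! b])"
  shows "a = b"
proof -
  have False if "a' < b'" "b' < length F"
    "y \<in> set (internal_labels [F ! a'])" "y \<in> set (internal_labels [F ! b'])" for a' b'
  proof -
    have "F = take a' F @ F ! a' # drop (Suc a') F"
      using that(1,2) by (simp add: id_take_nth_drop)
    then have "distinct (internal_labels [F ! a'] @ internal_labels (drop (Suc a') F))"
      using assms(1) by (metis distinct_append internal_labels_append internal_labels_Cons)
    moreover have "F ! b' \<in> set (drop (Suc a') F)"
      using that(1,2) by (auto simp: in_set_conv_nth intro!: exI[of _ "b' - Suc a'"])
    ultimately show False
      using that(3,4) set_internal_labels_mono by fastforce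
  qed
  then show ?thesis using assms(2-5) by (metis linorder_neqE_nat)
qed

lemma proper_Node_iff: "proper (Node (x, c) ts) \<longleftrightarrow> (\<forall>y\<in>set (internal_labels ts). x \<le> y)"
  by (auto simp: proper_def internal_labels_def internal_vertices_def not_less)

lemma length_subtrees: "length (subtrees t) = Suc (sum_list (map deg (subtrees t)))"
proof (induction t)
  case (Node a ts)
  have "length (forest_vertices ts) = length ts + sum_list (map deg (forest_vertices ts))"
    using Node.IH by (induction ts) auto
  then show ?case by simp
qed

lemma length_forest_vertices:
  "length (forest_vertices F) = length F + sum_list (map deg (forest_vertices F))"
  by (induction F) (auto simp: length_subtrees)

definition leaf_count :: "cforest \<Rightarrow> nat" where
  "leaf_count F = length (filter (\<lambda>t. deg t = 0) (forest_vertices F))"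

text \<open>\<^term>\<open>CFS r k S\<close> is the case \<open>L = [n]\<close>, \<open>m = r\<^sub>0\<close> and \<open>\<delta> x = d\<close> for \<open>x \<in> S\<^sub>d\<close>.\<close>

definition decorated_forest :: "nat \<Rightarrow> (nat \<Rightarrow> nat) \<Rightarrow> nat set \<Rightarrow> nat \<Rightarrow> cforest \<Rightarrow> bool" where
  "decorated_forest k \<delta> L m F \<longleftrightarrow> distinct (internal_labels F) \<and> set (internal_labels F) = L
     \<and> (\<forall>v\<in>set (internal_vertices F). deg v = \<delta> (label v))
     \<and> leaf_count F = m \<and> leaves_dummy F
     \<and> (\<forall>v\<in>set (internal_vertices F). colour v \<in> allowed_colours k v)"

definition colour_range :: "nat \<Rightarrow> nat \<Rightarrow> bool \<Rightarrow> color set" where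
  "colour_range k d p =
     {Col i | i. 1 \<le> i \<and> i \<le> d} \<union> (if p then {} else {Spec j | j. 1 \<le> j \<and> j \<le> k})"

lemma allowed_colours_Node:
  "allowed_colours k (Node (x, c) ts) = colour_range k (length ts) (proper (Node (x, c) ts))"
  by (simp add: allowed_colours_def colour_range_def)

lemma colour_range_eq_image:
  "colour_range k d p = Col ` {1..d} \<union> (if p then {} else Spec ` {1..k})"
  by (auto simp: colour_range_def)

lemma finite_colour_range: "finite (colour_range k d p)"
  by (simp add: colour_range_eq_image)

lemma card_colour_range: "card (colour_range k d p) = d + (if p then 0 else k)"
proof -
  have "card (Col ` {1..d} \<union> Spec ` {1..k}) = card (Col ` {1..d}) + card (Spec ` {1..k})"
    by (rule card_Un_disjoint) auto
  then show ?thesis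
    by (simp add: colour_range_eq_image card_image inj_on_def)
qed

text \<open>Removing a root (its children become roots) leaves every other vertex with the same
  descendants, hence with the same degree and properness.\<close>

lemma decorated_forest_Node_iff:
  assumes "ts \<noteq> []"
  shows "decorated_forest k \<delta> L m (P @ Node (x, c) ts # Q) \<longleftrightarrow>
     x \<in> L \<and> x \<notin> set (internal_labels (P @ ts @ Q))
       \<and> decorated_forest k \<delta> (L - {x}) m (P @ ts @ Q)
       \<and> length ts = \<delta> x \<and> c \<in> allowed_colours k (Node (x, c) ts)"
proof -
  let ?F = "P @ Node (x, c) ts # Q" and ?G = "P @ ts @ Q"
  have labels: "internal_labels ?F = internal_labels P @ x # internal_labels ts @ internal_labels Q"
    using assms by simp
  have "set (internal_vertices ?F) = insert (Node (x, c) ts) (set (internal_vertices ?G))"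
    using assms by auto
  moreover have "leaf_count ?F = leaf_count ?G"
    using assms by (simp add: leaf_count_def)
  moreover have "leaves_dummy ?F \<longleftrightarrow> leaves_dummy ?G"
    using assms by (auto simp: leaves_dummy_def)
  ultimately show ?thesis
    unfolding decorated_forest_def labels by auto
qed

lemma decorated_forest_length:
  assumes "decorated_forest k \<delta> L m F"
  shows "length F + sum \<delta> L = m + card L"
proof -
  have dist: "distinct (internal_labels F)" and labels: "set (internal_labels F) = L"
    and deg: "\<forall>v\<in>set (internal_vertices F). deg v = \<delta> (label v)"
    and leaves: "leaf_count F = m"
    using assms by (auto simp: decorated_forest_def)
  have "sum_list (map deg (forest_vertices F)) = sum_list (map deg (internal_vertices F))"
    unfolding internal_vertices_def by (rule sum_list_map_filter[symmetric]) simp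
  also have "map deg (internal_vertices F) = map \<delta> (internal_labels F)"
    using deg by (simp add: internal_labels_def)
  also have "sum_list (map \<delta> (internal_labels F)) = sum \<delta> L"
    using dist labels by (simp add: sum_list_distinct_conv_sum_set)
  finally have degs: "sum_list (map deg (forest_vertices F)) = sum \<delta> L" .
  have "length (forest_vertices F) = leaf_count F + length (internal_vertices F)"
    unfolding leaf_count_def internal_vertices_def
    using sum_length_filter_compl[of "\<lambda>t. deg t = 0" "forest_vertices F"] by (simp add: Suc_le_eq)
  also have "length (internal_vertices F) = card L"
    using dist labels by (metis distinct_card internal_labels_def length_map)
  finally show ?thesis
    using length_forest_vertices[of F] degs leaves by simp
qed

lemma decorated_forests_empty:
  "{F. decorated_forest k \<delta> {} m F} = {replicate m (Node (0, Col 0) [])}"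
proof (intro set_eqI iffI)
  fix F :: cforest assume "F \<in> {F. decorated_forest k \<delta> {} m F}"
  then have "internal_vertices F = []" "leaves_dummy F" "leaf_count F = m"
    by (simp_all add: decorated_forest_def internal_labels_def)
  then show "F \<in> {replicate m (Node (0, Col 0) [])}"
  proof (induction F arbitrary: m)
    case (Cons t F)
    then obtain a where t: "t = Node a []"
      by (cases t) (auto split: if_splits)
    with Cons.prems have "a = (0, Col 0)" "leaves_dummy F"
      by (auto simp: leaves_dummy_def)
    moreover have "m = Suc (leaf_count F)"
      using Cons.prems(3) t by (simp add: leaf_count_def)
    ultimately show ?case
      using Cons.IH[of "leaf_count F"] Cons.prems(1) t by simp
  qed (simp add: leaf_count_def)
next
  fix F :: cforest assume "F \<in> {replicate m (Node (0, Col 0) [])}"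
  then have F: "F = replicate m (Node (0, Col 0) [])" by simp
  have leaves: "forest_vertices F = F"
    unfolding F by (induction m) auto
  then show "F \<in> {F. decorated_forest k \<delta> {} m F}"
    unfolding F by (simp add: decorated_forest_def internal_labels_def internal_vertices_def
        leaf_count_def leaves_dummy_def)
qed

definition graft :: "nat \<Rightarrow> nat \<Rightarrow> color \<Rightarrow> nat \<Rightarrow> cforest \<Rightarrow> cforest" where
  "graft j x c d G = take j G @ Node (x, c) (take d (drop j G)) # drop (j + d) G"

lemma graft_inj:
  assumes "j + d \<le> length G" "j + d' \<le> length G'"
    and "graft j x c d G = graft j x' c' d' G'"
  shows "x = x' \<and> c = c' \<and> d = d' \<and> G = G'"
proof -
  have parts: "take j (graft j x c d G) = take j G"
    "graft j x c d G ! j = Node (x, c) (take d (drop j G))"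
    "drop (Suc j) (graft j x c d G) = drop (j + d) G"
    if "j + d \<le> length G" for x c d G
    using that by (auto simp: graft_def nth_append)
  have root: "Node (x, c) (take d (drop j G)) = Node (x', c') (take d' (drop j G'))"
    using parts(2)[OF assms(1), of x c] parts(2)[OF assms(2), of x' c'] assms(3) by simp
  then have "x = x'" "c = c'" and children: "take d (drop j G) = take d' (drop j G')"
    by auto
  moreover have "d = d'"
  proof -
    have "d = length (take d (drop j G))" "d' = length (take d' (drop j G'))"
      using assms(1,2) by simp_all
    then show ?thesis using children by simp
  qed
  moreover have "take j G = take j G'" "drop (j + d) G = drop (j + d') G'"
    using parts(1,3)[OF assms(1), of x c] parts(1,3)[OF assms(2), of x' c'] assms(3)
    by simp_all
  moreover have "H = take j H @ take e (drop j H) @ drop (j + e) H" for H :: cforest and e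
    by (metis append_take_drop_id drop_drop add.commute)
  ultimately show ?thesis
    by metis
qed

definition forests_min_at :: "nat \<Rightarrow> (nat \<Rightarrow> nat) \<Rightarrow> nat set \<Rightarrow> nat \<Rightarrow> nat \<Rightarrow> cforest set" where
  "forests_min_at k \<delta> L m j =
     {F. decorated_forest k \<delta> L m F \<and> j < length F \<and> Min L \<in> set (internal_labels [F ! j])}"

text \<open>The forests from which grafting a root labelled \<open>x\<close> over the trees \<open>j, \<dots>, j + \<delta> x - 1\<close>
  yields a forest in \<^term>\<open>forests_min_at k \<delta> L m j\<close>: unless \<open>x\<close> is the minimal label, the
  minimum has to lie in one of the grafted trees.\<close>

definition graft_bases :: "nat \<Rightarrow> (nat \<Rightarrow> nat) \<Rightarrow> nat set \<Rightarrow> nat \<Rightarrow> nat \<Rightarrow> nat \<Rightarrow> cforest set" where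
  "graft_bases k \<delta> L m j x =
     (if x = Min L then {G. decorated_forest k \<delta> (L - {x}) m G}
      else (\<Union>i<\<delta> x. forests_min_at k \<delta> (L - {x}) m (j + i)))"

lemma forests_min_at_disjoint:
  "a \<noteq> b \<Longrightarrow> forests_min_at k \<delta> L m a \<inter> forests_min_at k \<delta> L m b = {}"
  using internal_label_tree_unique by (auto simp: forests_min_at_def decorated_forest_def)

lemma decorated_forests_eq_UN_forests_min_at:
  assumes "finite L" "L \<noteq> {}"
  shows "{F. decorated_forest k \<delta> L m F} = (\<Union>j<m + card L - sum \<delta> L. forests_min_at k \<delta> L m j)"
proof (intro set_eqI iffI)
  fix F assume F: "F \<in> {F. decorated_forest k \<delta> L m F}"
  then have "Min L \<in> set (internal_labels F)"
    using assms by (simp add: decorated_forest_def)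
  then obtain j where "j < length F" "Min L \<in> set (internal_labels [F ! j])"
    by (rule internal_label_in_tree)
  moreover have "length F = m + card L - sum \<delta> L"
    using decorated_forest_length[of k \<delta> L m F] F by simp
  ultimately show "F \<in> (\<Union>j<m + card L - sum \<delta> L. forests_min_at k \<delta> L m j)"
    using F by (auto simp: forests_min_at_def)
qed (auto simp: forests_min_at_def)

lemma Min_Diff_singleton: "finite L \<Longrightarrow> x \<in> L \<Longrightarrow> x \<noteq> Min L \<Longrightarrow> Min (L - {x}) = Min L"
  by (rule Min_eqI) (auto intro: Min_in)

lemma graft_bases_decorated:
  assumes "finite L" "x \<in> L" "j + sum \<delta> L < m + card L" "G \<in> graft_bases k \<delta> L m j x"
  shows "decorated_forest k \<delta> (L - {x}) m G" "j + \<delta> x \<le> length G"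
proof -
  show G: "decorated_forest k \<delta> (L - {x}) m G"
    using assms(4) by (auto simp: graft_bases_def forests_min_at_def split: if_splits)
  have "sum \<delta> L = \<delta> x + sum \<delta> (L - {x})" "card L = Suc (card (L - {x}))"
    using sum.remove[OF assms(1,2)] card_Suc_Diff1[OF assms(1,2)] by simp_all
  then show "j + \<delta> x \<le> length G"
    using decorated_forest_length[OF G] assms(3) by linarith
qed

lemma proper_root_iff_Min:
  assumes "finite L" "x \<in> L" "set (internal_labels ts) \<subseteq> L"
    and "x \<noteq> Min L \<Longrightarrow> Min L \<in> set (internal_labels ts)"
  shows "proper (Node (x, c) ts) \<longleftrightarrow> x = Min L"
proof
  assume "proper (Node (x, c) ts)"
  then have "x \<le> Min L" if "x \<noteq> Min L"
    using assms(4)[OF that] by (simp add: proper_Node_iff)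
  then show "x = Min L"
    using Min_le[OF assms(1,2)] by fastforce
next
  assume "x = Min L"
  then show "proper (Node (x, c) ts)"
    using assms(3) Min_le[OF assms(1)] by (auto simp: proper_Node_iff)
qed

lemma forests_min_at_subset_graft_image:
  assumes fin: "finite L"
  shows "forests_min_at k \<delta> L m j \<subseteq> (\<lambda>(x, c, G). graft j x c (\<delta> x) G) `
           (SIGMA x:L. SIGMA c:colour_range k (\<delta> x) (x = Min L). graft_bases k \<delta> L m j x)"
proof
  fix F assume "F \<in> forests_min_at k \<delta> L m j"
  then have F: "decorated_forest k \<delta> L m F" and j: "j < length F"
    and min: "Min L \<in> set (internal_labels [F ! j])"
    by (auto simp: forests_min_at_def)
  obtain x c ts where tree: "F ! j = Node (x, c) ts"
    by (metis surj_pair tree.exhaust)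
  have "ts \<noteq> []" using min tree by auto
  define G where "G = take j F @ ts @ drop (Suc j) F"
  have F_eq: "F = take j F @ Node (x, c) ts # drop (Suc j) F"
    using j tree by (metis id_take_nth_drop)
  then have x: "x \<in> L" and G: "decorated_forest k \<delta> (L - {x}) m G"
    and deg: "length ts = \<delta> x" and colour: "c \<in> allowed_colours k (Node (x, c) ts)"
    using F decorated_forest_Node_iff[OF \<open>ts \<noteq> []\<close>] unfolding G_def by metis+
  have labels_G: "set (internal_labels G) = L - {x}"
    using G by (simp add: decorated_forest_def)
  have min_ts: "Min L \<in> set (internal_labels ts)" if "x \<noteq> Min L"
    using min tree that \<open>ts \<noteq> []\<close> by simp
  have "proper (Node (x, c) ts) \<longleftrightarrow> x = Min L"
    using labels_G min_ts by (intro proper_root_iff_Min[OF fin x]) (auto simp: G_def)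
  then have "c \<in> colour_range k (\<delta> x) (x = Min L)"
    using colour deg by (simp add: allowed_colours_Node)
  moreover have "G \<in> graft_bases k \<delta> L m j x"
  proof (cases "x = Min L")
    case True
    then show ?thesis using G by (simp add: graft_bases_def)
  next
    case False
    then obtain i where i: "i < length ts" "Min L \<in> set (internal_labels [ts ! i])"
      using min_ts by (blast elim: internal_label_in_tree)
    moreover have "G ! (j + i) = ts ! i" "j + i < length G"
      using i j by (simp_all add: G_def nth_append)
    ultimately have "G \<in> forests_min_at k \<delta> (L - {x}) m (j + i)"
      using G Min_Diff_singleton[OF fin x False] by (simp add: forests_min_at_def)
    then show ?thesis using False i(1) deg by (auto simp: graft_bases_def)
  qed
  moreover have "graft j x c (\<delta> x) G = F"
    using j deg F_eq by (simp add: graft_def G_def)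
  ultimately show "F \<in> (\<lambda>(x, c, G). graft j x c (\<delta> x) G) `
      (SIGMA x:L. SIGMA c:colour_range k (\<delta> x) (x = Min L). graft_bases k \<delta> L m j x)"
    using x by (auto intro!: image_eqI[where x="(x, c, G)"])
qed

lemma graft_image_subset_forests_min_at:
  assumes fin: "finite L" and pos: "\<forall>x\<in>L. 1 \<le> \<delta> x" and j: "j + sum \<delta> L < m + card L"
  shows "(\<lambda>(x, c, G). graft j x c (\<delta> x) G) `
           (SIGMA x:L. SIGMA c:colour_range k (\<delta> x) (x = Min L). graft_bases k \<delta> L m j x)
         \<subseteq> forests_min_at k \<delta> L m j"
proof clarify
  fix x c G
  assume x: "x \<in> L" and colour: "c \<in> colour_range k (\<delta> x) (x = Min L)"
    and base: "G \<in> graft_bases k \<delta> L m j x"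
  have G: "decorated_forest k \<delta> (L - {x}) m G" and len: "j + \<delta> x \<le> length G"
    using graft_bases_decorated[OF fin x j base] by auto
  define ts where "ts = take (\<delta> x) (drop j G)"
  have deg: "length ts = \<delta> x" using len by (simp add: ts_def)
  then have "ts \<noteq> []" using pos x by auto
  have F_eq: "graft j x c (\<delta> x) G = take j G @ Node (x, c) ts # drop (j + \<delta> x) G"
    by (simp add: graft_def ts_def)
  have G_eq: "G = take j G @ ts @ drop (j + \<delta> x) G"
    unfolding ts_def by (metis append_take_drop_id drop_drop add.commute)
  have labels_G: "set (internal_labels G) = L - {x}"
    using G by (simp add: decorated_forest_def)
  have min_ts: "Min L \<in> set (internal_labels ts)" if not_min: "x \<noteq> Min L"
  proof -
    obtain i where i: "i < \<delta> x" "G \<in> forests_min_at k \<delta> (L - {x}) m (j + i)"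
      using base not_min by (auto simp: graft_bases_def)
    then have "Min L \<in> set (internal_labels [G ! (j + i)])"
      using Min_Diff_singleton[OF fin x not_min] by (simp add: forests_min_at_def)
    moreover have "G ! (j + i) \<in> set ts"
      using i(1) len by (auto simp: ts_def in_set_conv_nth intro!: exI[of _ i])
    ultimately show ?thesis using set_internal_labels_mono by blast
  qed
  have "set (internal_labels ts) \<subseteq> set (internal_labels G)"
    by (subst G_eq) auto
  then have "proper (Node (x, c) ts) \<longleftrightarrow> x = Min L"
    using labels_G min_ts by (intro proper_root_iff_Min[OF fin x]) auto
  then have "c \<in> allowed_colours k (Node (x, c) ts)"
    using colour deg by (simp add: allowed_colours_Node)
  then have "decorated_forest k \<delta> L m (graft j x c (\<delta> x) G)"
    unfolding F_eq decorated_forest_Node_iff[OF \<open>ts \<noteq> []\<close>]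
    using x labels_G G deg G_eq by auto
  moreover have "graft j x c (\<delta> x) G ! j = Node (x, c) ts" "j < length (graft j x c (\<delta> x) G)"
    using len by (simp_all add: F_eq nth_append)
  moreover have "Min L \<in> set (internal_labels [Node (x, c) ts])"
    using min_ts \<open>ts \<noteq> []\<close> by (cases "x = Min L") auto
  ultimately show "graft j x c (\<delta> x) G \<in> forests_min_at k \<delta> L m j"
    by (simp add: forests_min_at_def)
qed

lemma card_forests_min_at_eq_sum:
  assumes fin: "finite L" and pos: "\<forall>x\<in>L. 1 \<le> \<delta> x" and j: "j + sum \<delta> L < m + card L"
    and fin_bases: "\<forall>x\<in>L. finite (graft_bases k \<delta> L m j x)"
  shows "card (forests_min_at k \<delta> L m j) =
           (\<Sum>x\<in>L. card (colour_range k (\<delta> x) (x = Min L)) * card (graft_bases k \<delta> L m j x))"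
proof -
  let ?\<Sigma> = "SIGMA x:L. SIGMA c:colour_range k (\<delta> x) (x = Min L). graft_bases k \<delta> L m j x"
  have "forests_min_at k \<delta> L m j = (\<lambda>(x, c, G). graft j x c (\<delta> x) G) ` ?\<Sigma>"
    using forests_min_at_subset_graft_image[OF fin] graft_image_subset_forests_min_at[OF fin pos j]
    by (rule subset_antisym)
  moreover have "inj_on (\<lambda>(x, c, G). graft j x c (\<delta> x) G) ?\<Sigma>"
  proof (rule inj_onI)
    fix a b assume "a \<in> ?\<Sigma>" "b \<in> ?\<Sigma>"
      and eq: "(\<lambda>(x, c, G). graft j x c (\<delta> x) G) a = (\<lambda>(x, c, G). graft j x c (\<delta> x) G) b"
    then obtain x c G x' c' G' where "a = (x, c, G)" "b = (x', c', G')"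
      and "j + \<delta> x \<le> length G" "j + \<delta> x' \<le> length G'"
      using graft_bases_decorated(2)[OF fin _ j] by auto
    then show "a = b"
      using graft_inj eq by auto
  qed
  ultimately have "card (forests_min_at k \<delta> L m j) = card ?\<Sigma>"
    by (simp add: card_image)
  also have "\<dots> = (\<Sum>x\<in>L. card (colour_range k (\<delta> x) (x = Min L)) * card (graft_bases k \<delta> L m j x))"
    using fin fin_bases finite_colour_range by simp
  finally show ?thesis .
qed

definition arith_prog_prod :: "nat \<Rightarrow> nat \<Rightarrow> nat \<Rightarrow> nat" where
  "arith_prog_prod k m n = (\<Prod>i\<in>{1..n - 1}. m + i * (1 + k))"

lemma arith_prog_prod_Suc:
  "0 < n \<Longrightarrow> arith_prog_prod k m (Suc n) = arith_prog_prod k m n * (m + n * (1 + k))"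
  by (cases n) (simp_all add: arith_prog_prod_def mult.commute)

lemma arith_prog_prod_pos: "0 < arith_prog_prod k m n"
  by (simp add: arith_prog_prod_def)

lemma card_decorated_forests_from_min_at:
  assumes "finite L" "L \<noteq> {}"
    and card_min_at: "\<And>j. j + sum \<delta> L < m + card L \<Longrightarrow> card (forests_min_at k \<delta> L m j) = c"
    and "0 < c"
  shows "finite {F. decorated_forest k \<delta> L m F}"
    and "card {F. decorated_forest k \<delta> L m F} = (m + card L - sum \<delta> L) * c"
proof -
  have fin: "finite (forests_min_at k \<delta> L m j)" if "j < m + card L - sum \<delta> L" for j
    using card_min_at[of j] that \<open>0 < c\<close> by (intro card_ge_0_finite) simp
  show "finite {F. decorated_forest k \<delta> L m F}"
    unfolding decorated_forests_eq_UN_forests_min_at[OF assms(1,2)] using fin by blast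
  have "card {F. decorated_forest k \<delta> L m F} =
      (\<Sum>j<m + card L - sum \<delta> L. card (forests_min_at k \<delta> L m j))"
    unfolding decorated_forests_eq_UN_forests_min_at[OF assms(1,2)]
    using fin forests_min_at_disjoint by (intro card_UN_disjoint) auto
  also have "\<dots> = (m + card L - sum \<delta> L) * c"
    using card_min_at by simp
  finally show "card {F. decorated_forest k \<delta> L m F} = (m + card L - sum \<delta> L) * c" .
qed

lemma card_graft_bases_not_Min:
  assumes fin: "finite L" and x: "x \<in> L" "x \<noteq> Min L" and j: "j + sum \<delta> L < m + card L"
    and card_min_at: "\<And>j'. j' + sum \<delta> (L - {x}) < m + card (L - {x}) \<Longrightarrow>
           card (forests_min_at k \<delta> (L - {x}) m j') = c"
    and "0 < c"
  shows "finite (graft_bases k \<delta> L m j x)"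
    and "card (graft_bases k \<delta> L m j x) = \<delta> x * c"
proof -
  have "sum \<delta> L = \<delta> x + sum \<delta> (L - {x})" "card L = Suc (card (L - {x}))"
    using sum.remove[OF fin x(1)] card_Suc_Diff1[OF fin x(1)] by simp_all
  then have card_i: "card (forests_min_at k \<delta> (L - {x}) m (j + i)) = c" if "i < \<delta> x" for i
    using card_min_at j that by simp
  then have fin_i: "finite (forests_min_at k \<delta> (L - {x}) m (j + i))" if "i < \<delta> x" for i
    using that \<open>0 < c\<close> by (intro card_ge_0_finite) simp
  have bases: "graft_bases k \<delta> L m j x = (\<Union>i<\<delta> x. forests_min_at k \<delta> (L - {x}) m (j + i))"
    using x by (simp add: graft_bases_def)
  show "finite (graft_bases k \<delta> L m j x)"
    unfolding bases using fin_i by blast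
  have "card (graft_bases k \<delta> L m j x) = (\<Sum>i<\<delta> x. card (forests_min_at k \<delta> (L - {x}) m (j + i)))"
    unfolding bases using fin_i forests_min_at_disjoint by (intro card_UN_disjoint) auto
  then show "card (graft_bases k \<delta> L m j x) = \<delta> x * c"
    using card_i by simp
qed

text \<open>The root \<open>x\<close> of tree \<open>j\<close> has \<open>\<delta> x + k\<close> colours and \<open>\<delta> x\<close> choices for the tree of the
  minimum when \<open>x \<noteq> Min L\<close>; the minimal root has \<open>\<delta> (Min L)\<close> colours and sits over any of the
  \<open>m + (n - 1) - \<Sum>\<delta> (L - {Min L})\<close> trees of the remaining forest. Since the factor \<open>\<delta> x\<close> turns
  \<open>\<Prod>\<delta> (L - {x})\<close> into \<open>\<Prod>\<delta> L\<close>, the contributions add up to \<open>m + (n - 1) (1 + k)\<close>.\<close>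

lemma card_root_contribution:
  assumes fin: "finite L" and nonempty: "L - {Min L} \<noteq> {}" and pos: "\<forall>x\<in>L. 1 \<le> \<delta> x"
    and j: "j + sum \<delta> L < m + card L"
    and IH: "\<And>x j'. x \<in> L \<Longrightarrow> j' + sum \<delta> (L - {x}) < m + card (L - {x}) \<Longrightarrow>
           card (forests_min_at k \<delta> (L - {x}) m j') = prod \<delta> (L - {x}) * P"
    and "0 < P" and x: "x \<in> L"
  shows "finite (graft_bases k \<delta> L m j x)"
    and "card (colour_range k (\<delta> x) (x = Min L)) * card (graft_bases k \<delta> L m j x) =
           (if x = Min L then m + card (L - {x}) - sum \<delta> (L - {x}) else \<delta> x + k) * (prod \<delta> L * P)"
proof -
  have "0 < prod \<delta> (L - {x})"
    using pos by (intro prod_pos) auto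
  then have pos_c: "0 < prod \<delta> (L - {x}) * P"
    using \<open>0 < P\<close> by simp
  have prod_L: "prod \<delta> L = \<delta> x * prod \<delta> (L - {x})"
    by (rule prod.remove[OF fin x])
  let ?c = "card (colour_range k (\<delta> x) (x = Min L)) * card (graft_bases k \<delta> L m j x)"
  have "finite (graft_bases k \<delta> L m j x) \<and>
      ?c = (if x = Min L then m + card (L - {x}) - sum \<delta> (L - {x}) else \<delta> x + k) * (prod \<delta> L * P)"
  proof (cases "x = Min L")
    case True
    then have "L - {x} \<noteq> {}" using nonempty by simp
    with True show ?thesis
      using card_decorated_forests_from_min_at[OF _ _ IH[OF x] pos_c] fin prod_L
      by (simp add: graft_bases_def card_colour_range)
  next
    case False
    then show ?thesis
      using card_graft_bases_not_Min[OF fin x False j IH[OF x] pos_c] prod_L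
      by (simp add: card_colour_range)
  qed
  then show "finite (graft_bases k \<delta> L m j x)"
    "?c = (if x = Min L then m + card (L - {x}) - sum \<delta> (L - {x}) else \<delta> x + k) * (prod \<delta> L * P)"
    by simp_all
qed

lemma card_forests_min_at_step:
  assumes fin: "finite L" and nonempty: "L - {Min L} \<noteq> {}" and pos: "\<forall>x\<in>L. 1 \<le> \<delta> x"
    and j: "j + sum \<delta> L < m + card L"
    and IH: "\<And>x j'. x \<in> L \<Longrightarrow> j' + sum \<delta> (L - {x}) < m + card (L - {x}) \<Longrightarrow>
           card (forests_min_at k \<delta> (L - {x}) m j') = prod \<delta> (L - {x}) * P"
    and "0 < P"
  shows "card (forests_min_at k \<delta> L m j) = (m + card (L - {Min L}) * (1 + k)) * (prod \<delta> L * P)"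
proof -
  define \<mu> where "\<mu> = Min L"
  have "L \<noteq> {}" using nonempty by blast
  then have \<mu>: "\<mu> \<in> L" using fin by (simp add: \<mu>_def)
  define lp where "lp = m + card (L - {\<mu>}) - sum \<delta> (L - {\<mu>})"
  note contribution = card_root_contribution[OF fin nonempty pos j IH \<open>0 < P\<close>]
  have "card (forests_min_at k \<delta> L m j) =
      (\<Sum>x\<in>L. (if x = \<mu> then lp else \<delta> x + k)) * (prod \<delta> L * P)"
    using card_forests_min_at_eq_sum[OF fin pos j] contribution
    by (simp add: \<mu>_def lp_def sum_distrib_right cong: if_cong)
  also have "(\<Sum>x\<in>L. (if x = \<mu> then lp else \<delta> x + k)) =
      lp + (sum \<delta> (L - {\<mu>}) + card (L - {\<mu>}) * k)"
  proof -
    have "(\<Sum>x\<in>L - {\<mu>}. if x = \<mu> then lp else \<delta> x + k) = (\<Sum>x\<in>L - {\<mu>}. \<delta> x + k)"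
      by (rule sum.cong) auto
    then show ?thesis
      unfolding sum.remove[OF fin \<mu>] by (simp add: sum.distrib)
  qed
  also have "\<dots> = m + card (L - {\<mu>}) * (1 + k)"
  proof -
    have "lp + sum \<delta> (L - {\<mu>}) = m + card (L - {\<mu>})"
      unfolding lp_def using j sum.remove[OF fin \<mu>, of \<delta>] card_Suc_Diff1[OF fin \<mu>] by linarith
    then show ?thesis by (simp add: algebra_simps)
  qed
  finally show ?thesis by (simp add: \<mu>_def)
qed

lemma card_forests_min_at:
  assumes "finite L" "L \<noteq> {}" "\<forall>x\<in>L. 1 \<le> \<delta> x" "j + sum \<delta> L < m + card L"
  shows "card (forests_min_at k \<delta> L m j) = prod \<delta> L * arith_prog_prod k m (card L)"
  using assms
proof (induction "card L" arbitrary: L j rule: less_induct)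
  case less
  note fin = less.prems(1) and pos = less.prems(3) and j = less.prems(4)
  have Min: "Min L \<in> L" using fin less.prems(2) by simp
  show ?case
  proof (cases "L - {Min L} = {}")
    case True
    then obtain a where L: "L = {a}" using Min by blast
    have "graft_bases k \<delta> L m j a = {replicate m (Node (0, Col 0) [])}"
      using L decorated_forests_empty by (simp add: graft_bases_def)
    then show ?thesis
      using card_forests_min_at_eq_sum[OF fin pos j] L
      by (simp add: card_colour_range arith_prog_prod_def)
  next
    case False
    have card_L: "card L = Suc (card (L - {x}))" if "x \<in> L" for x
      using card_Suc_Diff1[OF fin that] by simp
    have "card (forests_min_at k \<delta> (L - {x}) m j') =
        prod \<delta> (L - {x}) * arith_prog_prod k m (card (L - {Min L}))"
      if x: "x \<in> L" and j': "j' + sum \<delta> (L - {x}) < m + card (L - {x})" for x j'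
    proof -
      have "card (L - {x}) = card (L - {Min L})"
        using card_L[OF x] card_L[OF Min] by simp
      moreover have "0 < card (L - {Min L})"
        using False fin by (simp add: card_gt_0_iff)
      ultimately have "L - {x} \<noteq> {}"
        by (metis card.empty less_irrefl)
      moreover have "card (L - {x}) < card L"
        using card_L[OF x] by simp
      ultimately show ?thesis
        using less.hyps[of "L - {x}" j'] fin pos j' \<open>card (L - {x}) = card (L - {Min L})\<close> by simp
    qed
    then have "card (forests_min_at k \<delta> L m j) =
        (m + card (L - {Min L}) * (1 + k)) * (prod \<delta> L * arith_prog_prod k m (card (L - {Min L})))"
      using card_forests_min_at_step[OF fin False pos j] arith_prog_prod_pos by blast
    moreover have "0 < card (L - {Min L})"
      using False fin by (simp add: card_gt_0_iff)
    ultimately show ?thesis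
      using card_L[OF Min] by (simp add: arith_prog_prod_Suc algebra_simps)
  qed
qed

lemma card_decorated_forests:
  assumes "finite L" "L \<noteq> {}" "\<forall>x\<in>L. 1 \<le> \<delta> x"
  shows "card {F. decorated_forest k \<delta> L m F} =
           (m + card L - sum \<delta> L) * prod \<delta> L * arith_prog_prod k m (card L)"
proof -
  have "0 < prod \<delta> L"
    using assms(3) by (intro prod_pos) auto
  then show ?thesis
    using card_decorated_forests_from_min_at(2)[OF assms(1,2) card_forests_min_at[OF assms]]
    by (simp add: arith_prog_prod_pos mult.assoc)
qed

definition block_index :: "(nat \<Rightarrow> nat set) \<Rightarrow> nat \<Rightarrow> nat" where
  "block_index S x = (SOME d. 1 \<le> d \<and> x \<in> S d)"

lemma V_D:
  assumes "S \<in> V r"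
  shows "\<And>i j. 1 \<le> i \<Longrightarrow> 1 \<le> j \<Longrightarrow> i \<noteq> j \<Longrightarrow> S i \<inter> S j = {}"
    and "\<And>i. 1 \<le> i \<Longrightarrow> S i \<subseteq> {1..n_of r}"
    and "\<And>x. x \<in> {1..n_of r} \<Longrightarrow> \<exists>d\<ge>1. x \<in> S d"
    and "\<And>i. 1 \<le> i \<Longrightarrow> card (S i) = r i"
  using assms unfolding V_def by (auto simp: set_eq_iff)

lemma block_index_mem:
  assumes "S \<in> V r" "x \<in> {1..n_of r}"
  shows "1 \<le> block_index S x" "x \<in> S (block_index S x)"
  using someI_ex[OF V_D(3)[OF assms]] by (simp_all add: block_index_def)

lemma block_index_eqI:
  assumes "S \<in> V r" "1 \<le> d" "x \<in> S d"
  shows "block_index S x = d"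
proof -
  have "x \<in> {1..n_of r}" using V_D(2)[OF assms(1,2)] assms(3) by blast
  then show ?thesis
    using block_index_mem[OF assms(1)] V_D(1)[OF assms(1), of "block_index S x" d] assms(2,3) by blast
qed

lemma block_index_fibre:
  assumes "S \<in> V r" "1 \<le> d"
  shows "{x \<in> {1..n_of r}. block_index S x = d} = S d"
proof (intro set_eqI iffI)
  fix x assume "x \<in> {x \<in> {1..n_of r}. block_index S x = d}"
  then show "x \<in> S d" using block_index_mem(2)[OF assms(1)] by blast
next
  fix x assume "x \<in> S d"
  then show "x \<in> {x \<in> {1..n_of r}. block_index S x = d}"
    using block_index_eqI[OF assms] V_D(2)[OF assms] by blast
qed

lemma block_index_image:
  assumes "S \<in> V r"
  shows "block_index S ` {1..n_of r} = {d. 1 \<le> d \<and> r d \<noteq> 0}"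
proof (intro set_eqI iffI)
  fix d assume "d \<in> block_index S ` {1..n_of r}"
  then obtain x where x: "x \<in> {1..n_of r}" and d: "d = block_index S x" by blast
  have "1 \<le> d" "x \<in> S d" using block_index_mem[OF assms x] d by simp_all
  moreover have "finite (S d)"
    using V_D(2)[OF assms \<open>1 \<le> d\<close>] finite_subset by blast
  ultimately have "card (S d) \<noteq> 0" by auto
  then show "d \<in> {d. 1 \<le> d \<and> r d \<noteq> 0}"
    using V_D(4)[OF assms \<open>1 \<le> d\<close>] \<open>1 \<le> d\<close> by simp
next
  fix d assume d: "d \<in> {d. 1 \<le> d \<and> r d \<noteq> 0}"
  then have "S d \<noteq> {}" using V_D(4)[OF assms] by force
  then obtain x where x: "x \<in> S d" by blast
  have "1 \<le> d" using d by simp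
  show "d \<in> block_index S ` {1..n_of r}"
  proof (rule image_eqI)
    show "d = block_index S x" using block_index_eqI[OF assms \<open>1 \<le> d\<close> x] by simp
    show "x \<in> {1..n_of r}" using V_D(2)[OF assms \<open>1 \<le> d\<close>] x by blast
  qed
qed

lemma sum_block_index:
  assumes "S \<in> V r"
  shows "(\<Sum>x\<in>{1..n_of r}. f (block_index S x)) = (\<Sum>d\<in>{d. 1 \<le> d \<and> r d \<noteq> 0}. of_nat (r d) * f d)"
proof -
  have "(\<Sum>x\<in>{1..n_of r}. f (block_index S x)) =
      (\<Sum>d\<in>block_index S ` {1..n_of r}. \<Sum>x\<in>{x \<in> {1..n_of r}. block_index S x = d}. f (block_index S x))"
    by (rule sum.image_gen) simp
  also have "\<dots> = (\<Sum>d\<in>{d. 1 \<le> d \<and> r d \<noteq> 0}. of_nat (r d) * f d)"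
  proof (rule sum.cong[OF block_index_image[OF assms]])
    fix d assume d: "d \<in> {d. 1 \<le> d \<and> r d \<noteq> 0}"
    then have "(\<Sum>x\<in>{x \<in> {1..n_of r}. block_index S x = d}. f (block_index S x)) = (\<Sum>x\<in>S d. f d)"
      using block_index_fibre[OF assms] block_index_eqI[OF assms] by (intro sum.cong) auto
    then show "(\<Sum>x\<in>{x \<in> {1..n_of r}. block_index S x = d}. f (block_index S x)) = of_nat (r d) * f d"
      using d V_D(4)[OF assms] by simp
  qed
  finally show ?thesis .
qed

lemma prod_block_index:
  assumes "S \<in> V r"
  shows "(\<Prod>x\<in>{1..n_of r}. f (block_index S x)) = (\<Prod>d\<in>{d. 1 \<le> d \<and> r d \<noteq> 0}. f d ^ r d)"
proof -
  have "(\<Prod>x\<in>{1..n_of r}. f (block_index S x)) =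
      (\<Prod>d\<in>block_index S ` {1..n_of r}. \<Prod>x\<in>{x \<in> {1..n_of r}. block_index S x = d}. f (block_index S x))"
    by (rule prod.image_gen) simp
  also have "\<dots> = (\<Prod>d\<in>{d. 1 \<le> d \<and> r d \<noteq> 0}. f d ^ r d)"
  proof (rule prod.cong[OF block_index_image[OF assms]])
    fix d assume d: "d \<in> {d. 1 \<le> d \<and> r d \<noteq> 0}"
    then have "(\<Prod>x\<in>{x \<in> {1..n_of r}. block_index S x = d}. f (block_index S x)) = (\<Prod>x\<in>S d. f d)"
      using block_index_fibre[OF assms] block_index_eqI[OF assms] by (intro prod.cong) auto
    then show "(\<Prod>x\<in>{x \<in> {1..n_of r}. block_index S x = d}. f (block_index S x)) = f d ^ r d"
      using d V_D(4)[OF assms] by simp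
  qed
  finally show ?thesis .
qed

lemma ell_of_eq:
  assumes "finite {d. r d \<noteq> 0}"
  shows "ell_of r = int (r 0) + int (n_of r) - int (\<Sum>d\<in>{d. 1 \<le> d \<and> r d \<noteq> 0}. d * r d)"
proof -
  let ?D = "{d. 1 \<le> d \<and> r d \<noteq> 0}"
  define f where "f d = (int d - 1) * int (r d)" for d
  have "finite ?D" using assms by (rule rev_finite_subset) auto
  have "{d. r d \<noteq> 0} = (if r 0 = 0 then ?D else insert 0 ?D)"
    by (auto simp: Suc_le_eq intro: gr0I)
  then have "(\<Sum>d | r d \<noteq> 0. f d) = f 0 + (\<Sum>d\<in>?D. f d)"
    using \<open>finite ?D\<close> by (simp add: f_def)
  also have "(\<Sum>d\<in>?D. f d) = int (\<Sum>d\<in>?D. d * r d) - int (\<Sum>d\<in>?D. r d)"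
    by (simp add: f_def sum_subtractf algebra_simps)
  finally show ?thesis
    unfolding ell_of_def n_of_def f_def by simp
qed

lemma length_filter_deg_decorated:
  assumes "decorated_forest k \<delta> L m F" "1 \<le> i"
  shows "length (filter (\<lambda>t. deg t = i) (forest_vertices F)) = card {x \<in> L. \<delta> x = i}"
proof -
  have dist: "distinct (internal_labels F)" and labels: "set (internal_labels F) = L"
    and deg: "\<forall>v\<in>set (internal_vertices F). deg v = \<delta> (label v)"
    using assms(1) by (auto simp: decorated_forest_def)
  have "filter (\<lambda>t. deg t = i) (forest_vertices F) = filter (\<lambda>t. deg t = i) (internal_vertices F)"
    unfolding internal_vertices_def filter_filter using assms(2) by (intro filter_cong) auto
  also have "\<dots> = filter (\<lambda>t. \<delta> (label t) = i) (internal_vertices F)"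
    using deg by (intro filter_cong) auto
  finally have "length (filter (\<lambda>t. deg t = i) (forest_vertices F)) =
      length (filter (\<lambda>x. \<delta> x = i) (internal_labels F))"
    by (simp add: internal_labels_def filter_map comp_def)
  also have "\<dots> = card {x \<in> L. \<delta> x = i}"
    using dist labels by (simp add: distinct_card[symmetric])
  finally show ?thesis .
qed

lemma CFS_eq_decorated_forests:
  assumes S: "S \<in> V r"
  shows "CFS r k S = {F. decorated_forest k (block_index S) {1..n_of r} (r 0) F}"
proof (intro set_eqI iffI)
  fix F assume "F \<in> CFS r k S"
  then have "has_type r F" "is_labelled (n_of r) F" "leaves_dummy F"
    "\<forall>v\<in>set (internal_vertices F). colour v \<in> allowed_colours k v"
    and labels: "\<forall>v\<in>set (internal_vertices F). label v \<in> S (deg v)"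
    by (auto simp: CFS_def CF_def)
  moreover have "\<forall>v\<in>set (internal_vertices F). deg v = block_index S (label v)"
    using labels block_index_eqI[OF S] by (auto simp: internal_vertices_def)
  ultimately show "F \<in> {F. decorated_forest k (block_index S) {1..n_of r} (r 0) F}"
    by (simp add: decorated_forest_def is_labelled_def internal_labels_def has_type_def leaf_count_def)
next
  fix F assume "F \<in> {F. decorated_forest k (block_index S) {1..n_of r} (r 0) F}"
  then have F: "decorated_forest k (block_index S) {1..n_of r} (r 0) F" by simp
  then have "length (filter (\<lambda>t. deg t = i) (forest_vertices F)) = r i" for i
    using length_filter_deg_decorated[OF F] block_index_fibre[OF S] V_D(4)[OF S]
    by (cases "i = 0") (simp_all add: decorated_forest_def leaf_count_def)
  moreover have "label v \<in> S (deg v)" if "v \<in> set (internal_vertices F)" for v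
    using F that block_index_mem(2)[OF S] by (fastforce simp: decorated_forest_def internal_labels_def)
  ultimately show "F \<in> CFS r k S"
    using F by (simp add: CFS_def CF_def decorated_forest_def is_labelled_def internal_labels_def
        has_type_def)
qed

theorem theorem3p5:
  fixes r :: "nat \<Rightarrow> nat" and k :: nat and S :: "nat \<Rightarrow> nat set"
  assumes "finite {d. r d \<noteq> 0}"
    and "n_of r \<ge> 1"
    and "ell_of r \<ge> 1"
    and "S \<in> V r"
  shows "int (card (CFS r k S)) =
           ell_of r * (\<Prod>d\<in>{d. 1 \<le> d \<and> r d \<noteq> 0}. int d ^ r d)
             * (\<Prod>i\<in>{1..n_of r - 1}. int (r 0 + i * (1 + k)))"
proof -
  let ?L = "{1..n_of r}" and ?\<delta> = "block_index S" and ?D = "{d. 1 \<le> d \<and> r d \<noteq> 0}"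
  define N where "N = (\<Sum>d\<in>?D. d * r d)"
  have "sum ?\<delta> ?L = N"
    using sum_block_index[OF assms(4), of id] by (simp add: N_def mult.commute)
  moreover have "prod ?\<delta> ?L = (\<Prod>d\<in>?D. d ^ r d)"
    using prod_block_index[OF assms(4), of id] by simp
  ultimately have card: "card (CFS r k S) =
      (r 0 + n_of r - N) * (\<Prod>d\<in>?D. d ^ r d) * arith_prog_prod k (r 0) (n_of r)"
    using card_decorated_forests[of ?L ?\<delta> k "r 0"] block_index_mem(1)[OF assms(4)] assms(2)
    by (simp add: CFS_eq_decorated_forests[OF assms(4)])
  have "ell_of r = int (r 0) + int (n_of r) - int N"
    unfolding N_def by (rule ell_of_eq[OF assms(1)])
  with assms(3) have "ell_of r = int (r 0 + n_of r - N)"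
    by simp
  then show ?thesis
    unfolding card by (simp add: arith_prog_prod_def)
qed

end
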